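(* Let $L$ and $K$ be complete lattices and suppose $L$ is a parametrisation of $K$ through a family $(f_i:L\to K)_{i\in I}$. Let $O:L\to L$ be an operator and $A$ an approximator of $O$ such that both $O$ and $A$ respect each $f_i$, and let $(x,y)$ be the $A$-well-founded fixpoint of $O$. Then: (1) for each $i\in I$, $(f_i(x),f_i(y))$ is the $A_{f_i}$-well-founded fixpoint of $O_{f_i}$; (2) if the $A_{f_i}$-well-founded fixpoint of $O_{f_i}$ is exact for every $i\in I$, then the $A$-well-founded fixpoint of $O$ is exact.
   Context: $L$ is a parametrisation of $K$ through $(f_i)_{i\in I}$ if each $f_i:L\to K$ is a surjective lattice morphism (i.e. $f_i(\bigvee X)=\bigvee f_i(X)$ and $f_i(\bigwedge X)=\bigwedge f_i(X)$ for all $X\subseteq L$) and for all $x,y\in L$: $x\leq y$ iff $f_i(x)\leq f_i(y)$ for all $i\in I$. $L^2$ carries the precision order $(x,y)\leq_p(u,v)$ iff $x\leq u$ and $v\leq y$; $(x,y)_1=x,(x,y)_2=y$; a pair $(x,y)$ is exact if $x=y$. An approximator of $O$ is a $\leq_p$-monotone $A:L^2\to L^2$ with $A(x,x)_1\leq O(x)\leq A(x,x)_2$ for all $x$, assumed symmetric ($A(x,y)_1=A(y,x)_2$). $O$ respects $f$ if $f(x)=f(y)$ implies $f(O(x))=f(O(y))$; $O_f$ is the unique operator with $O_f\circ f=f\circ O$. With $f^2(x,y)=(f(x),f(y))$, $A$ respects $f$ if $f^2(p)=f^2(q)$ implies $f^2(A(p))=f^2(A(q))$, and $A_f$ is the unique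 operator with $A_f\circ f^2=f^2\circ A$. For an operator $B$ on $M^2$ and $P$ on $M$, a partial $B$-stable fixpoint is $(x,y)$ with $x=\mathrm{lfp}(B(\cdot,y)_1)$, $y=\mathrm{lfp}(B(x,\cdot)_2)$; the $B$-well-founded fixpoint of $P$ is the $\leq_p$-least partial $B$-stable fixpoint. *)

theory Defs
  imports Main
begin

definition complete_lattice_morphism :: "('l::complete_lattice \<Rightarrow> 'k::complete_lattice) \<Rightarrow> bool" where
  "complete_lattice_morphism f \<longleftrightarrow>
     (\<forall>X. f (Sup X) = Sup (f ` X)) \<and> (\<forall>X. f (Inf X) = Inf (f ` X))"

definition parametrisation ::
  "'i set \<Rightarrow> ('i \<Rightarrow> 'l::complete_lattice \<Rightarrow> 'k::complete_lattice) \<Rightarrow> bool" where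
  "parametrisation I f \<longleftrightarrow>
     (\<forall>i\<in>I. surj (f i) \<and> complete_lattice_morphism (f i)) \<and>
     (\<forall>x y. x \<le> y \<longleftrightarrow> (\<forall>i\<in>I. f i x \<le> f i y))"

definition prec_le :: "'a::order \<times> 'a \<Rightarrow> 'a \<times> 'a \<Rightarrow> bool" where
  "prec_le p q \<longleftrightarrow> fst p \<le> fst q \<and> snd q \<le> snd p"

definition exact :: "'a \<times> 'a \<Rightarrow> bool" where
  "exact p \<longleftrightarrow> fst p = snd p"

definition approximator :: "('a::order \<times> 'a \<Rightarrow> 'a \<times> 'a) \<Rightarrow> ('a \<Rightarrow> 'a) \<Rightarrow> bool" where
  "approximator A Op \<longleftrightarrow>
     (\<forall>p q. prec_le p q \<longrightarrow> prec_le (A p) (A q)) \<and>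
     (\<forall>x. fst (A (x, x)) \<le> Op x \<and> Op x \<le> snd (A (x, x)))"

definition symmetric_approx :: "('a \<times> 'a \<Rightarrow> 'a \<times> 'a) \<Rightarrow> bool" where
  "symmetric_approx A \<longleftrightarrow> (\<forall>x y. fst (A (x, y)) = snd (A (y, x)))"

definition respects_op :: "('a \<Rightarrow> 'a) \<Rightarrow> ('a \<Rightarrow> 'b) \<Rightarrow> bool" where
  "respects_op Op f \<longleftrightarrow> (\<forall>x y. f x = f y \<longrightarrow> f (Op x) = f (Op y))"

definition induced_op :: "('a \<Rightarrow> 'a) \<Rightarrow> ('a \<Rightarrow> 'b) \<Rightarrow> ('b \<Rightarrow> 'b)" where
  "induced_op Op f = (THE P. P \<circ> f = f \<circ> Op)"

definition sq :: "('a \<Rightarrow> 'b) \<Rightarrow> 'a \<times> 'a \<Rightarrow> 'b \<times> 'b" where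
  "sq f p = (f (fst p), f (snd p))"

definition respects_approx :: "('a \<times> 'a \<Rightarrow> 'a \<times> 'a) \<Rightarrow> ('a \<Rightarrow> 'b) \<Rightarrow> bool" where
  "respects_approx A f \<longleftrightarrow> (\<forall>p q. sq f p = sq f q \<longrightarrow> sq f (A p) = sq f (A q))"

definition induced_approx :: "('a \<times> 'a \<Rightarrow> 'a \<times> 'a) \<Rightarrow> ('a \<Rightarrow> 'b) \<Rightarrow> ('b \<times> 'b \<Rightarrow> 'b \<times> 'b)" where
  "induced_approx A f = (THE B. B \<circ> sq f = sq f \<circ> A)"

definition partial_stable :: "('a::complete_lattice \<times> 'a \<Rightarrow> 'a \<times> 'a) \<Rightarrow> 'a \<times> 'a \<Rightarrow> bool" where
  "partial_stable B p \<longleftrightarrow>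
     fst p = lfp (\<lambda>u. fst (B (u, snd p))) \<and> snd p = lfp (\<lambda>v. snd (B (fst p, v)))"

definition wf_fixpoint :: "('a::complete_lattice \<times> 'a \<Rightarrow> 'a \<times> 'a) \<Rightarrow> 'a \<times> 'a \<Rightarrow> bool" where
  "wf_fixpoint B p \<longleftrightarrow> partial_stable B p \<and> (\<forall>q. partial_stable B q \<longrightarrow> prec_le p q)"

end

theory Submission
  imports Defs
begin

text \<open>For a symmetric approximator the partial stable fixpoints are exactly the pairs (p, q)
  alternating under the antitone stable revision C v = lfp (A(-, v))_1, i.e. p = C q and q = C p,
  and the well-founded fixpoint is the precision-least such pair. A surjective complete lattice
  morphism f commutes with lfp, so f(C v) = C' (f v) for the stable revision C' of A_f. The image
  of the least alternating pair is therefore alternating; it is also least, because any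
  alternating pair (a, b) of C' pulls back to a C-consistent pair (Sup f^-1(\<down>a), Inf f^-1(\<up>b)),
  which the least alternating pair of C lies below. Exactness at every coordinate forces
  f_i x = f_i y for all i, hence x = y.\<close>

lemma complete_lattice_morphism_sup:
  assumes "complete_lattice_morphism f"
  shows "f (sup a b) = sup (f a) (f b)"
proof -
  have "f (Sup {a, b}) = Sup {f a, f b}"
    using assms unfolding complete_lattice_morphism_def by (metis image_insert image_empty)
  thus ?thesis by simp
qed

lemma complete_lattice_morphism_inf:
  assumes "complete_lattice_morphism f"
  shows "f (inf a b) = inf (f a) (f b)"
proof -
  have "f (Inf {a, b}) = Inf {f a, f b}"
    using assms unfolding complete_lattice_morphism_def by (metis image_insert image_empty)
  thus ?thesis by simp
qed

lemma complete_lattice_morphism_mono: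
  assumes "complete_lattice_morphism f"
  shows "mono f"
proof
  fix a b :: 'a assume "a \<le> b"
  hence "f b = sup (f a) (f b)"
    using complete_lattice_morphism_sup[OF assms, of a b] by (simp add: sup_absorb2)
  thus "f a \<le> f b" by (metis sup.cobounded1)
qed

lemma complete_lattice_morphism_Sup_preimage_le:
  assumes "complete_lattice_morphism f"
  shows "f (Sup {u. f u \<le> a}) \<le> a"
  using assms unfolding complete_lattice_morphism_def by (auto intro: Sup_least)

lemma complete_lattice_morphism_Inf_preimage_ge:
  assumes "complete_lattice_morphism f"
  shows "b \<le> f (Inf {v. b \<le> f v})"
  using assms unfolding complete_lattice_morphism_def by (auto intro: Inf_greatest)

lemma surj_complete_lattice_morphism_lift_le:
  fixes f :: "'l::complete_lattice \<Rightarrow> 'k::complete_lattice"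
  assumes "complete_lattice_morphism f" "surj f" "a \<le> b"
  obtains u v where "u \<le> v" "f u = a" "f v = b"
proof -
  obtain u v where uv: "a = f u" "b = f v" using assms(2) by (metis surjD)
  have "f (inf u v) = a"
    using complete_lattice_morphism_inf[OF assms(1)] uv assms(3) by (simp add: inf_absorb1)
  with uv that show ?thesis by (metis inf_le2)
qed

lemma mono_through_surj_morphism:
  fixes f :: "'l::complete_lattice \<Rightarrow> 'k::complete_lattice"
  assumes "complete_lattice_morphism f" "surj f" "mono g" "\<And>u. h (f u) = f (g u)"
  shows "mono h"
proof
  fix a b :: 'k assume "a \<le> b"
  then obtain u v where "u \<le> v" "f u = a" "f v = b"
    using surj_complete_lattice_morphism_lift_le[OF assms(1,2)] by blast
  thus "h a \<le> h b"
    using assms(3,4) complete_lattice_morphism_mono[OF assms(1)] by (metis monoD)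
qed

lemma antimono_through_surj_morphism:
  fixes f :: "'l::complete_lattice \<Rightarrow> 'k::complete_lattice"
  assumes "complete_lattice_morphism f" "surj f" "antimono g" "\<And>u. h (f u) = f (g u)"
  shows "antimono h"
proof
  fix a b :: 'k assume "a \<le> b"
  then obtain u v where "u \<le> v" "f u = a" "f v = b"
    using surj_complete_lattice_morphism_lift_le[OF assms(1,2)] by blast
  thus "h b \<le> h a"
    using assms(3,4) complete_lattice_morphism_mono[OF assms(1)] by (metis antimonoD monoD)
qed

lemma lfp_surj_complete_lattice_morphism:
  fixes f :: "'l::complete_lattice \<Rightarrow> 'k::complete_lattice"
  assumes cm: "complete_lattice_morphism f" and su: "surj f" and mg: "mono g"
    and hf: "\<And>u. h (f u) = f (g u)"
  shows "f (lfp g) = lfp h"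
proof (rule antisym)
  have mh: "mono h" using mono_through_surj_morphism[where h = h, OF cm su mg] hf .
  define u0 where "u0 = Sup {u. f u \<le> lfp h}"
  have fu0: "f u0 \<le> lfp h"
    unfolding u0_def by (rule complete_lattice_morphism_Sup_preimage_le[OF cm])
  have "f (g u0) = h (f u0)" using hf by simp
  also have "\<dots> \<le> h (lfp h)" using mh fu0 by (rule monoD)
  also have "\<dots> = lfp h" using lfp_unfold[OF mh] by simp
  finally have "g u0 \<le> u0" unfolding u0_def by (simp add: Sup_upper)
  hence "lfp g \<le> u0" by (rule lfp_lowerbound)
  thus "f (lfp g) \<le> lfp h"
    using complete_lattice_morphism_mono[OF cm] fu0 by (metis monoD order_trans)
next
  have "h (f (lfp g)) = f (lfp g)" using hf lfp_unfold[OF mg] by metis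
  thus "lfp h \<le> f (lfp g)" by (simp add: lfp_lowerbound)
qed

lemma induced_approx_sq:
  assumes su: "surj f" and r: "respects_approx A f"
  shows "induced_approx A f (sq f p) = sq f (A p)"
proof -
  have sq_surj: "surj (sq f)"
  proof (rule surjI)
    fix q
    show "sq f (inv f (fst q), inv f (snd q)) = q"
      unfolding sq_def by (simp add: surj_f_inv_f[OF su])
  qed
  define B where "B q = sq f (A (inv (sq f) q))" for q
  have B: "B \<circ> sq f = sq f \<circ> A"
  proof
    fix p
    have "sq f (inv (sq f) (sq f p)) = sq f p" by (rule surj_f_inv_f[OF sq_surj])
    thus "(B \<circ> sq f) p = (sq f \<circ> A) p"
      using r unfolding B_def respects_approx_def comp_apply by blast
  qed
  have "(THE B. B \<circ> sq f = sq f \<circ> A) = B"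
  proof (rule the_equality[where P = "\<lambda>B. B \<circ> sq f = sq f \<circ> A", OF B])
    fix B' assume "B' \<circ> sq f = sq f \<circ> A"
    with B have "B' \<circ> sq f = B \<circ> sq f" by simp
    thus "B' = B" using sq_surj by (metis fun.map_comp surj_iff comp_id)
  qed
  thus ?thesis unfolding induced_approx_def using B by (metis comp_apply)
qed

lemma symmetric_induced_approx:
  assumes "surj f" "respects_approx A f" "symmetric_approx A"
  shows "symmetric_approx (induced_approx A f)"
  unfolding symmetric_approx_def
proof (intro allI)
  fix a b
  obtain u v where "a = f u" "b = f v" using assms(1) by (metis surjD)
  thus "fst (induced_approx A f (a, b)) = snd (induced_approx A f (b, a))"
    using induced_approx_sq[OF assms(1,2), of "(u, v)"] induced_approx_sq[OF assms(1,2), of "(v, u)"]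
      assms(3) unfolding sq_def symmetric_approx_def by simp
qed

definition stable_revision :: "('a::complete_lattice \<times> 'a \<Rightarrow> 'a \<times> 'a) \<Rightarrow> 'a \<Rightarrow> 'a" where
  "stable_revision B v = lfp (\<lambda>u. fst (B (u, v)))"

lemma approximator_fst_mono:
  assumes "approximator A Op" "u \<le> u'" "v' \<le> v"
  shows "fst (A (u, v)) \<le> fst (A (u', v'))"
  using assms unfolding approximator_def prec_le_def by (metis fst_conv snd_conv)

lemma antimono_stable_revision:
  assumes "approximator A Op"
  shows "antimono (stable_revision A)"
proof
  fix v v' :: 'a assume "v \<le> v'"
  thus "stable_revision A v' \<le> stable_revision A v"
    unfolding stable_revision_def by (intro lfp_mono approximator_fst_mono[OF assms]) auto
qed

lemma stable_revision_induced_approx: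
  assumes cm: "complete_lattice_morphism f" and su: "surj f"
    and A: "approximator A Op" and r: "respects_approx A f"
  shows "f (stable_revision A v) = stable_revision (induced_approx A f) (f v)"
  unfolding stable_revision_def
proof (rule lfp_surj_complete_lattice_morphism[OF cm su])
  show "mono (\<lambda>u. fst (A (u, v)))" by (rule monoI) (use approximator_fst_mono[OF A] in blast)
  show "fst (induced_approx A f (f u, f v)) = f (fst (A (u, v)))" for u
    using induced_approx_sq[OF su r, of "(u, v)"] unfolding sq_def by simp
qed

definition least_alternating_pair :: "('a::order \<Rightarrow> 'a) \<Rightarrow> 'a \<Rightarrow> 'a \<Rightarrow> bool" where
  "least_alternating_pair C x y \<longleftrightarrow>
     x = C y \<and> y = C x \<and> (\<forall>p q. p = C q \<and> q = C p \<longrightarrow> x \<le> p \<and> q \<le> y)"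

lemma partial_stable_iff_alternating:
  assumes "symmetric_approx B"
  shows "partial_stable B (p, q) \<longleftrightarrow> p = stable_revision B q \<and> q = stable_revision B p"
proof -
  have "snd (B (u, v)) = fst (B (v, u))" for u v
    using assms unfolding symmetric_approx_def by metis
  thus ?thesis unfolding partial_stable_def stable_revision_def by simp
qed

lemma wf_fixpoint_iff_least_alternating_pair:
  assumes "symmetric_approx B"
  shows "wf_fixpoint B (x, y) \<longleftrightarrow> least_alternating_pair (stable_revision B) x y"
  unfolding wf_fixpoint_def least_alternating_pair_def prec_le_def split_paired_All
    partial_stable_iff_alternating[OF assms] fst_conv snd_conv
  by blast

text \<open>The consistent pairs C v \<le> u, v \<le> C u form a set whose precision-infimum
  (Inf of first components, Sup of second) is itself an alternating pair, so the least alternating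
  pair lies below every consistent pair.\<close>
lemma least_alternating_pair_below_consistent:
  fixes C :: "'a::complete_lattice \<Rightarrow> 'a"
  assumes anti: "antimono C" and least: "least_alternating_pair C x y"
    and consistent: "C v0 \<le> u0" "v0 \<le> C u0"
  shows "x \<le> u0 \<and> v0 \<le> y"
proof -
  define P where "P = {(u, v). C v \<le> u \<and> v \<le> C u}"
  define m1 where "m1 = Inf (fst ` P)"
  define m2 where "m2 = Sup (snd ` P)"
  have below: "m1 \<le> u \<and> v \<le> m2" if "(u, v) \<in> P" for u v
    unfolding m1_def m2_def using that by (force intro: Inf_lower Sup_upper)
  have m1: "C m2 \<le> m1" unfolding m1_def
  proof (rule Inf_greatest)
    fix u assume "u \<in> fst ` P"
    then obtain v where uv: "(u, v) \<in> P" by force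
    hence "C m2 \<le> C v" using below anti by (blast dest: antimonoD)
    also have "\<dots> \<le> u" using uv unfolding P_def by simp
    finally show "C m2 \<le> u" .
  qed
  have m2: "m2 \<le> C m1" unfolding m2_def
  proof (rule Sup_least)
    fix v assume "v \<in> snd ` P"
    then obtain u where uv: "(u, v) \<in> P" by force
    hence "v \<le> C u" unfolding P_def by simp
    also have "\<dots> \<le> C m1" using below anti uv by (blast dest: antimonoD)
    finally show "v \<le> C m1" .
  qed
  have "(C m2, C m1) \<in> P" unfolding P_def using anti m1 m2 by (auto dest: antimonoD)
  hence "m1 = C m2" "m2 = C m1" using below m1 m2 by (auto intro: antisym)
  hence "x \<le> m1 \<and> m2 \<le> y" using least unfolding least_alternating_pair_def by blast
  moreover have "(u0, v0) \<in> P" unfolding P_def using consistent by simp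
  ultimately show ?thesis using below by (meson order_trans)
qed

lemma least_alternating_pair_through_surj_morphism:
  fixes f :: "'l::complete_lattice \<Rightarrow> 'k::complete_lattice"
  assumes cm: "complete_lattice_morphism f" and su: "surj f" and anti: "antimono C"
    and comm: "\<And>v. D (f v) = f (C v)" and least: "least_alternating_pair C x y"
  shows "least_alternating_pair D (f x) (f y)"
proof -
  have antiD: "antimono D" using antimono_through_surj_morphism[where h = D, OF cm su anti] comm .
  have image_below: "f x \<le> a \<and> b \<le> f y" if ab: "a = D b" "b = D a" for a b
  proof -
    define u0 where "u0 = Sup {u. f u \<le> a}"
    define v0 where "v0 = Inf {v. b \<le> f v}"
    have fu0: "f u0 \<le> a"
      unfolding u0_def by (rule complete_lattice_morphism_Sup_preimage_le[OF cm])
    have fv0: "b \<le> f v0"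
      unfolding v0_def by (rule complete_lattice_morphism_Inf_preimage_ge[OF cm])
    have "f (C v0) \<le> a" using antimonoD[OF antiD fv0] ab(1) comm[of v0] by argo
    hence "C v0 \<le> u0" unfolding u0_def by (simp add: Sup_upper)
    moreover have "b \<le> f (C u0)" using antimonoD[OF antiD fu0] ab(2) comm[of u0] by argo
    hence "v0 \<le> C u0" unfolding v0_def by (simp add: Inf_lower)
    ultimately have "x \<le> u0 \<and> v0 \<le> y"
      by (rule least_alternating_pair_below_consistent[OF anti least])
    thus ?thesis
      using monoD[OF complete_lattice_morphism_mono[OF cm]] fu0 fv0 by (meson order_trans)
  qed
  have "f x = D (f y)" "f y = D (f x)"
    using least comm unfolding least_alternating_pair_def by metis+
  with image_below show ?thesis unfolding least_alternating_pair_def by blast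
qed

lemma wf_fixpoint_induced_approx:
  assumes cm: "complete_lattice_morphism f" and su: "surj f"
    and A: "approximator A Op" "symmetric_approx A" and r: "respects_approx A f"
    and wf: "wf_fixpoint A (x, y)"
  shows "wf_fixpoint (induced_approx A f) (f x, f y)"
  unfolding wf_fixpoint_iff_least_alternating_pair[OF symmetric_induced_approx[OF su r A(2)]]
proof (rule least_alternating_pair_through_surj_morphism[OF cm su antimono_stable_revision[OF A(1)]])
  show "stable_revision (induced_approx A f) (f v) = f (stable_revision A v)" for v
    by (rule stable_revision_induced_approx[OF cm su A(1) r, symmetric])
  show "least_alternating_pair (stable_revision A) x y"
    using wf wf_fixpoint_iff_least_alternating_pair[OF A(2)] by blast
qed

theorem theorem3p6:
  fixes I :: "'i set"
    and f :: "'i \<Rightarrow> 'l::complete_lattice \<Rightarrow> 'k::complete_lattice"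
    and Op :: "'l \<Rightarrow> 'l"
    and A :: "'l \<times> 'l \<Rightarrow> 'l \<times> 'l"
    and x y :: 'l
  assumes "parametrisation I f"
    and "approximator A Op"
    and "symmetric_approx A"
    and "\<forall>i\<in>I. respects_op Op (f i)"
    and "\<forall>i\<in>I. respects_approx A (f i)"
    and "wf_fixpoint A (x, y)"
  shows "(\<forall>i\<in>I. wf_fixpoint (induced_approx A (f i)) (f i x, f i y))
     \<and> ((\<forall>i\<in>I. \<forall>p. wf_fixpoint (induced_approx A (f i)) p \<longrightarrow> exact p) \<longrightarrow> exact (x, y))"
proof (intro conjI impI ballI)
  show wf_i: "wf_fixpoint (induced_approx A (f i)) (f i x, f i y)" if "i \<in> I" for i
  proof (rule wf_fixpoint_induced_approx)
    show "complete_lattice_morphism (f i)" "surj (f i)"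
      using assms(1) that unfolding parametrisation_def by auto
    show "respects_approx A (f i)" using assms(5) that by blast
  qed (use assms(2,3,6) in auto)
  assume "\<forall>i\<in>I. \<forall>p. wf_fixpoint (induced_approx A (f i)) p \<longrightarrow> exact p"
  hence "\<forall>i\<in>I. f i x = f i y" using wf_i unfolding exact_def by fastforce
  hence "x \<le> y" "y \<le> x" using assms(1) unfolding parametrisation_def by auto
  thus "exact (x, y)" unfolding exact_def by simp
qed

end
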